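(* Let $G=(V,E)$ be a multigraph with a spanning forest $F\subseteq E$, and let $\Delta\ge1$. Suppose the endpoints of the edges in $E\setminus F$ are distinct vertices, any two of which are at distance at least $\Delta$ in $F$. Then every Eulerian subgraph $E^*\subseteq E$ satisfies $|E^*|\ge\Delta\cdot|E^*\setminus F|$.
   Context: A subgraph (edge set) $E^*\subseteq E$ is Eulerian if every vertex has even degree in $E^*$. A spanning forest is a maximal acyclic subset of $E$; distances in $F$ are shortest-path distances in the forest $F$. *)

theory Defs
  imports Main "HOL-Library.Extended_Nat"
begin

text \<open>A multigraph is given by a finite vertex set V, a finite edge set E and
  an endpoint assignment: edge e joins src e and tgt e (loops and parallel
  edges allowed; the orientation is irrelevant).\<close>

definition multigraph :: "'v set \<Rightarrow> 'e set \<Rightarrow> ('e \<Rightarrow> 'v) \<Rightarrow> ('e \<Rightarrow> 'v) \<Rightarrow> bool" where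
  "multigraph V E src tgt \<longleftrightarrow> finite V \<and> finite E \<and>
     (\<forall>e\<in>E. src e \<in> V \<and> tgt e \<in> V)"

definition walk :: "('e \<Rightarrow> 'v) \<Rightarrow> ('e \<Rightarrow> 'v) \<Rightarrow> 'e set \<Rightarrow> 'v list \<Rightarrow> 'e list \<Rightarrow> bool" where
  "walk src tgt A vs es \<longleftrightarrow> length vs = Suc (length es) \<and>
     (\<forall>i < length es. es ! i \<in> A \<and> {src (es ! i), tgt (es ! i)} = {vs ! i, vs ! Suc i})"

definition has_cycle :: "('e \<Rightarrow> 'v) \<Rightarrow> ('e \<Rightarrow> 'v) \<Rightarrow> 'e set \<Rightarrow> bool" where
  "has_cycle src tgt A \<longleftrightarrow> (\<exists>vs es. walk src tgt A vs es \<and> es \<noteq> [] \<and> distinct es \<and> hd vs = last vs)"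

definition acyclic_edges :: "('e \<Rightarrow> 'v) \<Rightarrow> ('e \<Rightarrow> 'v) \<Rightarrow> 'e set \<Rightarrow> bool" where
  "acyclic_edges src tgt A \<longleftrightarrow> \<not> has_cycle src tgt A"

definition spanning_forest :: "'e set \<Rightarrow> ('e \<Rightarrow> 'v) \<Rightarrow> ('e \<Rightarrow> 'v) \<Rightarrow> 'e set \<Rightarrow> bool" where
  "spanning_forest E src tgt F \<longleftrightarrow> F \<subseteq> E \<and> acyclic_edges src tgt F \<and>
     (\<forall>e \<in> E - F. \<not> acyclic_edges src tgt (insert e F))"

text \<open>Shortest-path distance in the edge set F (infinity if no path).\<close>
definition edist :: "('e \<Rightarrow> 'v) \<Rightarrow> ('e \<Rightarrow> 'v) \<Rightarrow> 'e set \<Rightarrow> 'v \<Rightarrow> 'v \<Rightarrow> enat" where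
  "edist src tgt F u v = (INF es \<in> {es. \<exists>vs. walk src tgt F vs es \<and> hd vs = u \<and> last vs = v}.
      enat (length es))"

text \<open>Degree of v in the edge set A (a loop counts twice).\<close>
definition deg :: "('e \<Rightarrow> 'v) \<Rightarrow> ('e \<Rightarrow> 'v) \<Rightarrow> 'e set \<Rightarrow> 'v \<Rightarrow> nat" where
  "deg src tgt A v = card {e \<in> A. src e = v} + card {e \<in> A. tgt e = v}"

definition eulerian :: "'v set \<Rightarrow> ('e \<Rightarrow> 'v) \<Rightarrow> ('e \<Rightarrow> 'v) \<Rightarrow> 'e set \<Rightarrow> bool" where
  "eulerian V src tgt A \<longleftrightarrow> (\<forall>v \<in> V. even (deg src tgt A v))"

end

theory Submission imports Defs begin

text \<open>Split \<open>E\<^sup>*\<close> into its forest part \<open>A = E\<^sup>* \<inter> F\<close> and its non-forest part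
  \<open>N = E\<^sup>* - F\<close>. The edges of \<open>N\<close> form a matching, so the vertices of odd degree in \<open>A\<close>
  are exactly the \<open>2|N|\<close> endpoints of \<open>N\<close>, and they are pairwise at distance at least \<open>\<Delta>\<close>
  in \<open>A\<close>. For such an endpoint \<open>t\<close> and \<open>r < \<Delta> div 2\<close>, the ball of radius \<open>r\<close> around \<open>t\<close>
  in \<open>A\<close> contains exactly one odd vertex, so some edge of \<open>A\<close> leaves it, joining the
  spheres of radii \<open>r\<close> and \<open>r + 1\<close>. These edges are distinct for distinct pairs
  \<open>(t, r)\<close>, hence \<open>|A| \<ge> 2|N| (\<Delta> div 2) \<ge> (\<Delta> - 1)|N|\<close> and so \<open>|E\<^sup>*| \<ge> \<Delta>|N|\<close>.\<close>

section \<open>Walks and distances\<close>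

lemma walk_Nil: "walk src tgt A vs [] \<longleftrightarrow> (\<exists>v. vs = [v])"
  unfolding walk_def by (auto simp: length_Suc_conv)

lemma walk_Cons: "walk src tgt A (u # vs) (e # es) \<longleftrightarrow>
    vs \<noteq> [] \<and> e \<in> A \<and> {src e, tgt e} = {u, hd vs} \<and> walk src tgt A vs es"
  unfolding walk_def by (cases vs) (auto simp: All_less_Suc2)

lemma walk_imp_ne: "walk src tgt A vs es \<Longrightarrow> vs \<noteq> []"
  unfolding walk_def by auto

lemma walk_mono: "A \<subseteq> B \<Longrightarrow> walk src tgt A vs es \<Longrightarrow> walk src tgt B vs es"
  unfolding walk_def by blast

lemma walk_append:
  assumes "walk src tgt A vs es" "walk src tgt A ws fs" "last vs = hd ws"
  shows "walk src tgt A (vs @ tl ws) (es @ fs) \<and> hd (vs @ tl ws) = hd vs \<and>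
    last (vs @ tl ws) = last ws"
  using assms
proof (induction es arbitrary: vs)
  case Nil
  then obtain v where "vs = [v]" by (auto simp: walk_Nil)
  with Nil walk_imp_ne[OF Nil(2)] show ?case by (cases ws) auto
next
  case (Cons e es)
  then obtain u vs' where vs: "vs = u # vs'" by (cases vs) (auto dest: walk_imp_ne)
  with Cons.prems(1) have step: "vs' \<noteq> [] \<and> e \<in> A \<and> {src e, tgt e} = {u, hd vs'}"
    and rest: "walk src tgt A vs' es" by (auto simp: walk_Cons)
  from Cons.IH[OF rest Cons.prems(2)] Cons.prems(3) vs step
  show ?case using walk_imp_ne[OF Cons.prems(2)] by (simp add: walk_Cons)
qed

lemma walk_rev: "walk src tgt A vs es \<Longrightarrow> walk src tgt A (rev vs) (rev es)"
proof (induction es arbitrary: vs)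
  case Nil
  then show ?case by (auto simp: walk_Nil)
next
  case (Cons e es)
  then obtain u vs' where vs: "vs = u # vs'" by (cases vs) (auto dest: walk_imp_ne)
  with Cons.prems have step: "vs' \<noteq> [] \<and> e \<in> A \<and> {src e, tgt e} = {u, hd vs'}"
    and rest: "walk src tgt A vs' es" by (auto simp: walk_Cons)
  have "walk src tgt A [hd vs', u] [e]"
    using step by (auto simp: walk_Cons walk_Nil insert_commute)
  from walk_append[OF Cons.IH[OF rest] this] step vs show ?case by (simp add: last_rev)
qed

lemma edist_le_length:
  "walk src tgt A vs es \<Longrightarrow> hd vs = u \<Longrightarrow> last vs = v \<Longrightarrow> edist src tgt A u v \<le> enat (length es)"
  unfolding edist_def by (rule INF_lower) blast

lemma edist_enatE:
  assumes "edist src tgt A u v = enat n"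
  obtains vs es where "walk src tgt A vs es" "hd vs = u" "last vs = v" "length es = n"
proof -
  let ?L = "(\<lambda>es. enat (length es)) ` {es. \<exists>vs. walk src tgt A vs es \<and> hd vs = u \<and> last vs = v}"
  have "?L \<noteq> {}"
  proof
    assume "?L = {}"
    with assms show False unfolding edist_def by (simp add: Inf_enat_def)
  qed
  then obtain l where "l \<in> ?L" by blast
  moreover have "Inf ?L = (LEAST l. l \<in> ?L)"
    unfolding Inf_enat_def using \<open>?L \<noteq> {}\<close> by (rule if_not_P)
  ultimately have "Inf ?L \<in> ?L" using LeastI[of "\<lambda>l. l \<in> ?L"] by simp
  with assms that show ?thesis unfolding edist_def by force
qed

lemma edist_self: "edist src tgt A u u = 0"
  using edist_le_length[of src tgt A "[u]" "[]"] by (simp add: walk_Nil enat_0)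

lemma edist_commute: "edist src tgt A u v = edist src tgt A v u"
proof -
  have "edist src tgt A u v \<le> edist src tgt A v u" for u v
  proof (cases "edist src tgt A v u")
    case (enat n)
    then obtain vs es where "walk src tgt A vs es" "hd vs = v" "last vs = u" "length es = n"
      by (rule edist_enatE)
    with edist_le_length[OF walk_rev, of src tgt A vs es] walk_imp_ne enat show ?thesis
      by (simp add: hd_rev last_rev)
  qed simp
  then show ?thesis by (metis antisym)
qed

lemma edist_triangle: "edist src tgt A u w \<le> edist src tgt A u v + edist src tgt A v w"
proof (cases "edist src tgt A u v"; cases "edist src tgt A v w")
  fix n m
  assume n: "edist src tgt A u v = enat n" and m: "edist src tgt A v w = enat m"
  obtain vs es where vs: "walk src tgt A vs es" "hd vs = u" "last vs = v" "length es = n"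
    using n by (rule edist_enatE)
  obtain ws fs where ws: "walk src tgt A ws fs" "hd ws = v" "last ws = w" "length fs = m"
    using m by (rule edist_enatE)
  from walk_append[OF vs(1) ws(1)] vs ws
  have "edist src tgt A u w \<le> enat (length (es @ fs))"
    by (intro edist_le_length[of _ _ _ "vs @ tl ws"]) auto
  with vs ws n m show ?thesis by simp
qed simp_all

lemma edist_antimono: "A \<subseteq> B \<Longrightarrow> edist src tgt B u v \<le> edist src tgt A u v"
  unfolding edist_def by (rule INF_superset_mono) (auto dest: walk_mono)

lemma edist_edge:
  assumes "e \<in> A" "{x, y} = {src e, tgt e}"
  shows "edist src tgt A x y \<le> 1"
proof -
  have "walk src tgt A [x, y] [e]" using assms by (simp add: walk_Cons walk_Nil)
  from edist_le_length[OF this] show ?thesis by (simp add: one_enat_def)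
qed

lemma edist_step:
  assumes "e \<in> A" "{x, y} = {src e, tgt e}"
  shows "edist src tgt A t y \<le> edist src tgt A t x + 1"
proof -
  have "edist src tgt A x y \<le> 1" using assms by (rule edist_edge)
  then show ?thesis using edist_triangle[of src tgt A t y x] add_left_mono order_trans by metis
qed

text \<open>A vertex at finite distance from \<open>t\<close> is \<open>t\<close> itself or the last vertex of a walk,
  hence an endpoint of an edge.\<close>
lemma finite_edist_ball:
  assumes "finite A"
  shows "finite {v. edist src tgt A t v \<le> enat r}"
proof (rule finite_subset)
  show "{v. edist src tgt A t v \<le> enat r} \<subseteq> insert t (src ` A \<union> tgt ` A)"
  proof
    fix v assume "v \<in> {v. edist src tgt A t v \<le> enat r}"
    then obtain n where "edist src tgt A t v = enat n" by (cases "edist src tgt A t v") auto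
    then obtain vs es where w: "walk src tgt A vs es" "hd vs = t" "last vs = v"
      by (rule edist_enatE)
    show "v \<in> insert t (src ` A \<union> tgt ` A)"
    proof (cases es rule: rev_cases)
      case Nil
      with w show ?thesis by (auto simp: walk_Nil)
    next
      case (snoc es' e)
      have "length vs = Suc (Suc (length es'))" using w(1) snoc by (simp add: walk_def)
      then have "last vs = vs ! Suc (length es')"
        by (metis diff_Suc_1 last_conv_nth list.size(3) nat.distinct(1))
      moreover have "e \<in> A" "{src e, tgt e} = {vs ! length es', vs ! Suc (length es')}"
        using w(1) snoc unfolding walk_def by (metis length_append_singleton lessI nth_append_length)+
      ultimately show ?thesis using w(3) by auto
    qed
  qed
  show "finite (insert t (src ` A \<union> tgt ` A))" using assms by simp
qed

section \<open>Degrees\<close>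

lemma deg_Un_disjoint:
  assumes "finite B" "finite C" "B \<inter> C = {}"
  shows "deg src tgt (B \<union> C) v = deg src tgt B v + deg src tgt C v"
proof -
  have "card {e \<in> B \<union> C. f e = v} = card {e\<in>B. f e = v} + card {e\<in>C. f e = v}" for f
    using assms by (subst card_Un_disjoint[symmetric]) (auto intro: arg_cong[where f=card])
  then show ?thesis unfolding deg_def by simp
qed

lemma deg_loop_free:
  assumes "finite A" "\<forall>e\<in>A. src e \<noteq> tgt e"
  shows "deg src tgt A v = card {e\<in>A. v \<in> {src e, tgt e}}"
proof -
  have "{e\<in>A. v \<in> {src e, tgt e}} = {e\<in>A. src e = v} \<union> {e\<in>A. tgt e = v}" by auto
  moreover have "card ({e\<in>A. src e = v} \<union> {e\<in>A. tgt e = v}) =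
      card {e\<in>A. src e = v} + card {e\<in>A. tgt e = v}"
    using assms by (intro card_Un_disjoint) auto
  ultimately show ?thesis unfolding deg_def by simp
qed

lemma sum_deg:
  assumes "finite A" "finite S"
  shows "(\<Sum>v\<in>S. deg src tgt A v) = card {e\<in>A. src e \<in> S} + card {e\<in>A. tgt e \<in> S}"
proof -
  have "(\<Sum>v\<in>S. card {e\<in>A. f e = v}) = card {e\<in>A. f e \<in> S}" for f
  proof -
    have "{e\<in>A. f e \<in> S} = (\<Union>v\<in>S. {e\<in>A. f e = v})" by auto
    moreover have "card (\<Union>v\<in>S. {e\<in>A. f e = v}) = (\<Sum>v\<in>S. card {e\<in>A. f e = v})"
      using assms by (intro card_UN_disjoint) auto
    ultimately show ?thesis by simp
  qed
  then show ?thesis unfolding deg_def sum.distrib by simp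
qed

text \<open>Handshake lemma for a vertex set: if no edge leaves \<open>S\<close>, every edge is counted
  twice in the degree sum over \<open>S\<close>.\<close>
lemma odd_sum_deg_imp_crossing_edge:
  assumes "finite A" "finite S" "odd (\<Sum>v\<in>S. deg src tgt A v)"
  shows "\<exists>e\<in>A. (src e \<in> S) \<noteq> (tgt e \<in> S)"
proof (rule ccontr)
  assume "\<not> ?thesis"
  then have "{e\<in>A. src e \<in> S} = {e\<in>A. tgt e \<in> S}" by blast
  with assms show False by (simp add: sum_deg)
qed

lemma even_deg_if_eulerian:
  assumes "multigraph V E src tgt" "A \<subseteq> E" "eulerian V src tgt A"
  shows "even (deg src tgt A v)"
proof (cases "v \<in> V")
  case True
  with assms(3) show ?thesis by (simp add: eulerian_def)
next
  case False
  with assms(1,2) have "{e \<in> A. src e = v} = {}" "{e \<in> A. tgt e = v} = {}"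
    by (auto simp: multigraph_def)
  then show ?thesis unfolding deg_def by (simp only: card.empty) simp
qed

lemma deg_matching:
  assumes "finite N" "\<forall>e\<in>N. src e \<noteq> tgt e"
    and "\<forall>e\<in>N. \<forall>e'\<in>N. e \<noteq> e' \<longrightarrow> {src e, tgt e} \<inter> {src e', tgt e'} = {}"
  shows "deg src tgt N v = (if v \<in> (\<Union>e\<in>N. {src e, tgt e}) then 1 else 0)"
proof (cases "v \<in> (\<Union>e\<in>N. {src e, tgt e})")
  case True
  then obtain e0 where "e0 \<in> N" "v \<in> {src e0, tgt e0}" by blast
  with assms(3) have "{e\<in>N. v \<in> {src e, tgt e}} = {e0}" by blast
  with True assms(1,2) show ?thesis by (simp add: deg_loop_free)
next
  case False
  then have "{e\<in>N. v \<in> {src e, tgt e}} = {}" by blast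
  with False assms(1,2) show ?thesis by (simp add: deg_loop_free)
qed

lemma card_endpoints_matching:
  assumes "finite N" "\<forall>e\<in>N. src e \<noteq> tgt e"
    and "\<forall>e\<in>N. \<forall>e'\<in>N. e \<noteq> e' \<longrightarrow> {src e, tgt e} \<inter> {src e', tgt e'} = {}"
  shows "card (\<Union>e\<in>N. {src e, tgt e}) = 2 * card N"
proof -
  have "card (\<Union>e\<in>N. {src e, tgt e}) = (\<Sum>e\<in>N. card {src e, tgt e})"
    using assms(1,3) by (intro card_UN_disjoint) auto
  also have "\<dots> = (\<Sum>e\<in>N. 2)" using assms(2) by (intro sum.cong) auto
  finally show ?thesis by simp
qed

section \<open>Edges forced by far-apart odd vertices\<close>

lemma layer_edge_exists:
  assumes "finite A" "odd (deg src tgt A t)"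
    and "\<And>v. v \<noteq> t \<Longrightarrow> odd (deg src tgt A v) \<Longrightarrow> enat r < edist src tgt A t v"
  shows "\<exists>e\<in>A. \<exists>x y. {x, y} = {src e, tgt e} \<and>
    edist src tgt A t x = enat r \<and> edist src tgt A t y = enat (Suc r)"
proof -
  define S where "S = {v. edist src tgt A t v \<le> enat r}"
  have "finite S" unfolding S_def using assms(1) by (rule finite_edist_ball)
  have "t \<in> S" by (simp add: S_def edist_self)
  have even_rest: "even (deg src tgt A v)" if "v \<in> S - {t}" for v
    using assms(3)[of v] that leD unfolding S_def by blast
  have "even (\<Sum>v\<in>S - {t}. deg src tgt A v)" by (rule dvd_sum) (rule even_rest)
  with assms(2) \<open>t \<in> S\<close> \<open>finite S\<close> have "odd (\<Sum>v\<in>S. deg src tgt A v)"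
    by (simp add: sum.remove)
  then obtain e where "e \<in> A" and "(src e \<in> S) \<noteq> (tgt e \<in> S)"
    using odd_sum_deg_imp_crossing_edge[OF assms(1) \<open>finite S\<close>] by blast
  then obtain x y where xy: "{x, y} = {src e, tgt e}" "x \<in> S" "y \<notin> S" by blast
  then obtain n where n: "edist src tgt A t x = enat n" "n \<le> r"
    by (cases "edist src tgt A t x") (auto simp: S_def)
  have "edist src tgt A t y \<le> edist src tgt A t x + 1"
    using \<open>e \<in> A\<close> xy(1) by (rule edist_step)
  with n have "edist src tgt A t y \<le> enat (Suc n)" by (simp add: eSuc_enat[symmetric] plus_1_eSuc)
  with xy(3) n obtain m where "edist src tgt A t y = enat m" "m \<le> Suc n" "r < m"
    by (cases "edist src tgt A t y") (auto simp: S_def)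
  with n have "edist src tgt A t x = enat r" "edist src tgt A t y = enat (Suc r)" by auto
  with \<open>e \<in> A\<close> xy(1) show ?thesis by blast
qed

text \<open>Choosing for each \<open>t \<in> T\<close> and \<open>r < \<Delta> div 2\<close> an edge from the sphere of radius \<open>r\<close>
  around \<open>t\<close> to the sphere of radius \<open>r + 1\<close> is injective: two such edges around
  distinct centres would put the centres within distance \<open>r + r' + 1 < \<Delta>\<close>.\<close>
lemma card_odd_vertices_mult_half_dist_le:
  assumes "finite A"
    and odd_iff: "\<And>v. odd (deg src tgt A v) \<longleftrightarrow> v \<in> T"
    and far: "\<And>t t'. t \<in> T \<Longrightarrow> t' \<in> T \<Longrightarrow> t \<noteq> t' \<Longrightarrow> enat \<Delta> \<le> edist src tgt A t t'"
  shows "card T * (\<Delta> div 2) \<le> card A"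
proof -
  let ?d = "edist src tgt A"
  define L where "L = \<Delta> div 2"
  have "\<exists>e\<in>A. \<exists>x y. {x, y} = {src e, tgt e} \<and> ?d t x = enat r \<and> ?d t y = enat (Suc r)"
    if "t \<in> T" "r < L" for t r
  proof (rule layer_edge_exists[OF assms(1)])
    show "odd (deg src tgt A t)" using odd_iff that(1) by blast
    fix v assume "v \<noteq> t" "odd (deg src tgt A v)"
    with odd_iff that have "enat \<Delta> \<le> ?d t v" by (intro far) auto
    moreover have "r < \<Delta>" using that(2) by (simp add: L_def)
    ultimately show "enat r < ?d t v" using order_less_le_trans[of "enat r" "enat \<Delta>"] by simp
  qed
  then obtain g where g: "\<And>t r. t \<in> T \<Longrightarrow> r < L \<Longrightarrow> g t r \<in> A \<and> (\<exists>x y.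
      {x, y} = {src (g t r), tgt (g t r)} \<and> ?d t x = enat r \<and> ?d t y = enat (Suc r))"
    by metis
  have "inj_on (\<lambda>(t, r). g t r) (T \<times> {..<L})"
  proof (rule inj_onI, clarify)
    fix t r t' r'
    assume tr: "t \<in> T" "r < L" "t' \<in> T" "r' < L" and eq: "g t r = g t' r'"
    obtain x y where xy: "{x, y} = {src (g t r), tgt (g t r)}" "?d t x = enat r" "?d t y = enat (Suc r)"
      using g[OF tr(1,2)] by blast
    obtain x' y' where xy': "{x', y'} = {src (g t r), tgt (g t r)}"
        "?d t' x' = enat r'" "?d t' y' = enat (Suc r')"
      using g[OF tr(3,4)] eq by metis
    from xy(1) xy'(1) have same_ends: "x = x' \<and> y = y' \<or> x = y' \<and> y = x'"
      by (metis doubleton_eq_iff)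
    then have "?d t' x \<le> enat (Suc r')" using xy' by auto
    have "t = t'"
    proof (rule ccontr)
      assume "t \<noteq> t'"
      then have "enat \<Delta> \<le> ?d t x + ?d x t'"
        using far tr edist_triangle order_trans by metis
      also have "\<dots> = enat r + ?d t' x" using xy(2) edist_commute by metis
      also have "\<dots> \<le> enat r + enat (Suc r')" using \<open>?d t' x \<le> _\<close> by (rule add_left_mono)
      finally show False using tr(2,4) by (simp add: L_def)
    qed
    with same_ends xy xy' show "t = t' \<and> r = r'" by auto
  qed
  moreover have "(\<lambda>(t, r). g t r) ` (T \<times> {..<L}) \<subseteq> A" using g by auto
  ultimately have "card (T \<times> {..<L}) \<le> card A" using assms(1) by (rule card_inj_on_le)
  then show ?thesis by (simp add: L_def card_cartesian_product)
qed

theorem mainTheorem18: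
  fixes V :: "'v set" and E :: "'e set" and src tgt :: "'e \<Rightarrow> 'v"
    and F :: "'e set" and \<Delta> :: nat
  assumes "multigraph V E src tgt"
    and "spanning_forest E src tgt F"
    and "\<Delta> \<ge> 1"
    and "\<forall>e \<in> E - F. src e \<noteq> tgt e"
    and "\<forall>e \<in> E - F. \<forall>e' \<in> E - F. e \<noteq> e' \<longrightarrow> {src e, tgt e} \<inter> {src e', tgt e'} = {}"
    and "\<forall>u \<in> (\<Union>e \<in> E - F. {src e, tgt e}). \<forall>v \<in> (\<Union>e \<in> E - F. {src e, tgt e}).
           u \<noteq> v \<longrightarrow> edist src tgt F u v \<ge> enat \<Delta>"
    and "Estar \<subseteq> E"
    and "eulerian V src tgt Estar"
  shows "card Estar \<ge> \<Delta> * card (Estar - F)"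
proof -
  define A where "A = Estar \<inter> F"
  define N where "N = Estar - F"
  define T where "T = (\<Union>e \<in> N. {src e, tgt e})"
  have "finite Estar" using assms(1,7) by (auto simp: multigraph_def intro: finite_subset)
  then have fin: "finite A" "finite N" by (auto simp: A_def N_def)
  have split: "Estar = A \<union> N" "A \<inter> N = {}" by (auto simp: A_def N_def)
  have N_loop_free: "\<forall>e\<in>N. src e \<noteq> tgt e" and N_matching:
    "\<forall>e\<in>N. \<forall>e'\<in>N. e \<noteq> e' \<longrightarrow> {src e, tgt e} \<inter> {src e', tgt e'} = {}"
    using assms(4,5,7) by (auto simp: N_def)
  have odd_iff: "odd (deg src tgt A v) \<longleftrightarrow> v \<in> T" for v
  proof -
    have "deg src tgt Estar v = deg src tgt A v + deg src tgt N v"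
      using deg_Un_disjoint[OF fin split(2)] split(1) by simp
    moreover have "even (deg src tgt Estar v)" using assms(1,7,8) by (rule even_deg_if_eulerian)
    moreover have "deg src tgt N v = (if v \<in> T then 1 else 0)"
      unfolding T_def using fin(2) N_loop_free N_matching by (rule deg_matching)
    ultimately show ?thesis by simp
  qed
  have far: "enat \<Delta> \<le> edist src tgt A t t'" if "t \<in> T" "t' \<in> T" "t \<noteq> t'" for t t'
  proof -
    have "T \<subseteq> (\<Union>e \<in> E - F. {src e, tgt e})" using assms(7) by (auto simp: T_def N_def)
    with that have "enat \<Delta> \<le> edist src tgt F t t'" by (intro assms(6)[rule_format]) auto
    also have "\<dots> \<le> edist src tgt A t t'" by (rule edist_antimono) (simp add: A_def)
    finally show ?thesis .
  qed
  have "\<Delta> * card N \<le> (2 * (\<Delta> div 2) + 1) * card N" by (intro mult_right_mono) auto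
  also have "\<dots> = card T * (\<Delta> div 2) + card N"
    using card_endpoints_matching[OF fin(2) N_loop_free N_matching]
    by (simp add: T_def algebra_simps)
  also have "\<dots> \<le> card A + card N"
    using card_odd_vertices_mult_half_dist_le[OF fin(1) odd_iff far] by simp
  also have "\<dots> = card Estar" using split fin by (simp add: card_Un_disjoint)
  finally show ?thesis by (simp add: N_def)
qed

end
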